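(* Let $X_0$ and $X_1$ be mm-spaces with $X_0\prec X_1$, and let $f\colon X_1\to X_0$ be a 1-Lipschitz map with $f_*\mu_{X_1}=\mu_{X_0}$. For $0<t<1$ define a metric on $X_1$ by $d_{X_t}(x,x'):=(1-t)\,d_{X_0}(f(x),f(x'))+t\,d_{X_1}(x,x')$ and the mm-space $X_t:=(X_1,d_{X_t},\mu_{X_1})$. Then $[0,1]\ni t\mapsto X_t$ is a $\square$-continuous path from $X_0$ to $X_1$, and it is monotone with respect to the Lipschitz order: $X_s\prec X_t$ for all $0\le s\le t\le1$.
   Context: An mm-space is a triple $(X,d_X,\mu_X)$ where $(X,d_X)$ is a complete separable metric space and $\mu_X$ a Borel probability measure, considered up to mm-isomorphism (an isometry between the supports of the measures pushing one measure to the other). A parameter of $X$ is a Borel map $\varphi\colon [0,1)\to X$ with $\varphi_*\mathcal{L}^1=\mu_X$. The box distance $\square(X,Y)$ is the infimum of $\varepsilon\ge 0$ such that there exist parameters $\varphi$ of $X$, $\psi$ of $Y$ and a Borel set $I_0\subset[0,1)$ with $\mathcal{L}^1(I_0)\ge 1-\varepsilon$ and $|d_X(\varphi(s),\varphi(t))-d_Y(\psi(s),\psi(t))|\le\varepsilon$ for all $s,t\in I_0$. Lipschitz order: $Y\prec X$ if there exists a 1-Lipschitz map $g\colon X\to Y$ with $g_*\mu_X=\mu_Y$. *)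

theory Defs
  imports "HOL-Analysis.Analysis" "HOL-Probability.Probability"
begin

text \<open>An mm-space is represented by a distance function together with a Borel probability
measure; the underlying set is the space of the measure.\<close>

type_synonym 'a mm = "('a \<Rightarrow> 'a \<Rightarrow> real) \<times> 'a measure"

definition mm_space :: "'a mm \<Rightarrow> bool" where
  "mm_space X \<longleftrightarrow>
     (let d = fst X; \<mu> = snd X; M = space \<mu> in
       Metric_space M d \<and> Metric_space.mcomplete M d \<and>
       separable_space (Metric_space.mtopology M d) \<and>
       sets \<mu> = sigma_sets M {U. openin (Metric_space.mtopology M d) U} \<and>
       prob_space \<mu>)"

definition unit_lebesgue :: "real measure" where
  "unit_lebesgue = restrict_space lborel {0..<1}"

definition parameter :: "'a mm \<Rightarrow> (real \<Rightarrow> 'a) \<Rightarrow> bool" where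
  "parameter X \<phi> \<longleftrightarrow> \<phi> \<in> measurable unit_lebesgue (snd X) \<and> distr unit_lebesgue (snd X) \<phi> = snd X"

definition box_dist :: "'a mm \<Rightarrow> 'b mm \<Rightarrow> real" where
  "box_dist X Y = Inf {\<epsilon>. \<epsilon> \<ge> 0 \<and> (\<exists>\<phi> \<psi> I0. parameter X \<phi> \<and> parameter Y \<psi> \<and>
       I0 \<in> sets unit_lebesgue \<and> measure unit_lebesgue I0 \<ge> 1 - \<epsilon> \<and>
       (\<forall>s\<in>I0. \<forall>t\<in>I0. \<bar>fst X (\<phi> s) (\<phi> t) - fst Y (\<psi> s) (\<psi> t)\<bar> \<le> \<epsilon>))}"

definition lip1 :: "'a mm \<Rightarrow> 'b mm \<Rightarrow> ('a \<Rightarrow> 'b) \<Rightarrow> bool" where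
  "lip1 X Y g \<longleftrightarrow> g \<in> space (snd X) \<rightarrow> space (snd Y) \<and>
     (\<forall>x\<in>space (snd X). \<forall>x'\<in>space (snd X). fst Y (g x) (g x') \<le> fst X x x')"

definition lip_dominated :: "'b mm \<Rightarrow> 'a mm \<Rightarrow> bool" (infix "\<prec>" 50) where
  "Y \<prec> X \<longleftrightarrow> (\<exists>g. lip1 X Y g \<and> g \<in> measurable (snd X) (snd Y) \<and> distr (snd X) (snd Y) g = snd Y)"

definition interp :: "'a mm \<Rightarrow> 'b mm \<Rightarrow> ('b \<Rightarrow> 'a) \<Rightarrow> real \<Rightarrow> 'b mm" where
  "interp X0 X1 f t = ((\<lambda>x x'. (1 - t) * fst X0 (f x) (f x') + t * fst X1 x x'), snd X1)"

end

(* Monotonicity in the Lipschitz order is immediate from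
     d_t(x,x') - d_s(x,x') = (t - s) (d_1(x,x') - d_0(f x, f x')) \<ge> 0   for s \<le> t,
   with the identity, resp. f, as dominating map. For continuity, one parameter \<psi> of X_1
   parametrises every X_t, and f \<circ> \<psi> parametrises X_0; on a set of measure at least 1 - \<epsilon>
   where d_1(\<psi> s, \<psi> s') \<le> R, the distances of X_t and X_u differ by at most |t - u| R.
   The substantial step is that every mm-space has a parameter at all: nested partitions of the
   space into cells of diameter tending to 0 are matched with nested partitions of [0,1) into
   intervals of the same measures, and \<psi> s is the limit of the cells whose intervals contain s. *)

theory Submission
  imports Defs
begin

lemma exists_divide_power2_less:
  assumes "0 < e"
  shows "\<exists>k. c / 2 ^ k < (e :: real)"
proof -
  have "eventually (\<lambda>k. c / 2 ^ k < e) sequentially"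
    using order_tendstoD(2)[OF LIMSEQ_divide_realpow_zero[of 2 c] assms] by simp
  then show ?thesis
    by (auto simp: eventually_sequentially)
qed

lemma Least_threshold_incseq_eq_iff:
  fixes S :: "nat \<Rightarrow> real"
  assumes "incseq S" "S 0 \<le> x" "\<exists>n. x < S n"
  shows "(LEAST j. x < S (Suc j)) = j \<longleftrightarrow> S j \<le> x \<and> x < S (Suc j)"
proof
  obtain n where "x < S (Suc n)"
    using assms(3) \<open>incseq S\<close> by (metis incseq_SucD order_less_le_trans)
  then have ex: "\<exists>j. x < S (Suc j)" by blast
  assume least: "(LEAST j. x < S (Suc j)) = j"
  have "S j \<le> x"
  proof (cases j)
    case (Suc k)
    then show ?thesis
      using not_less_Least[of k "\<lambda>j. x < S (Suc j)"] least by fastforce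
  qed (use assms(2) in simp)
  then show "S j \<le> x \<and> x < S (Suc j)"
    using LeastI_ex[OF ex] least by simp
next
  assume bounds: "S j \<le> x \<and> x < S (Suc j)"
  show "(LEAST j. x < S (Suc j)) = j"
  proof (rule Least_equality)
    fix k assume "x < S (Suc k)"
    then show "j \<le> k"
      using bounds incseqD[OF \<open>incseq S\<close>, of "Suc k" j] by (cases "j \<le> k") auto
  qed (use bounds in simp)
qed

lemma space_unit_lebesgue [simp]: "space unit_lebesgue = {0..<1}"
  by (simp add: unit_lebesgue_def space_restrict_space)

lemma sets_unit_lebesgueI: "A \<subseteq> {0..<1} \<Longrightarrow> A \<in> sets borel \<Longrightarrow> A \<in> sets unit_lebesgue"
  unfolding unit_lebesgue_def by (subst sets_restrict_space_iff) auto

lemma emeasure_unit_lebesgue: "A \<subseteq> {0..<1} \<Longrightarrow> emeasure unit_lebesgue A = emeasure lborel A"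
  unfolding unit_lebesgue_def by (rule emeasure_restrict_space) auto

lemma Metric_space_convex_combination:
  assumes "Metric_space M0 d0" "Metric_space M1 d1" "f \<in> M1 \<rightarrow> M0" "0 < t" "t \<le> 1"
  shows "Metric_space M1 (\<lambda>x y. (1 - t) * d0 (f x) (f y) + t * d1 x y)"
proof -
  interpret A: Metric_space M0 d0
    by (rule assms(1))
  interpret B: Metric_space M1 d1
    by (rule assms(2))
  show ?thesis
  proof
    fix x y z
    show "0 \<le> (1 - t) * d0 (f x) (f y) + t * d1 x y"
      using assms(4,5) by simp
    show "(1 - t) * d0 (f x) (f y) + t * d1 x y = (1 - t) * d0 (f y) (f x) + t * d1 y x"
      by (simp add: A.commute B.commute)
    assume x: "x \<in> M1" and y: "y \<in> M1"
    show "(1 - t) * d0 (f x) (f y) + t * d1 x y = 0 \<longleftrightarrow> x = y"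
    proof
      assume "(1 - t) * d0 (f x) (f y) + t * d1 x y = 0"
      moreover have "0 \<le> (1 - t) * d0 (f x) (f y)" "0 \<le> t * d1 x y"
        using assms(4,5) by simp_all
      ultimately have "t * d1 x y = 0"
        by linarith
      then show "x = y"
        using assms(4) x y by simp
    next
      assume "x = y"
      moreover have "f y \<in> M0"
        using assms(3) y by auto
      ultimately show "(1 - t) * d0 (f x) (f y) + t * d1 x y = 0"
        using y by simp
    qed
    assume z: "z \<in> M1"
    have "(1 - t) * d0 (f x) (f z) \<le> (1 - t) * (d0 (f x) (f y) + d0 (f y) (f z))"
      using assms(3,5) x y z by (intro mult_left_mono A.triangle) auto
    moreover have "t * d1 x z \<le> t * (d1 x y + d1 y z)"
      using assms(4) B.triangle[OF x y z] by (intro mult_left_mono) auto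
    ultimately show "(1 - t) * d0 (f x) (f z) + t * d1 x z \<le>
        ((1 - t) * d0 (f x) (f y) + t * d1 x y) + ((1 - t) * d0 (f y) (f z) + t * d1 y z)"
      by (simp add: algebra_simps)
  qed
qed

lemma Lipschitz_equivalent_mtopology_eq:
  assumes "Metric_space M d" "Metric_space M d'" "0 < c"
    and lower: "\<And>x y. x \<in> M \<Longrightarrow> y \<in> M \<Longrightarrow> c * d x y \<le> d' x y"
    and upper: "\<And>x y. x \<in> M \<Longrightarrow> y \<in> M \<Longrightarrow> d' x y \<le> d x y"
  shows "Metric_space.mtopology M d' = Metric_space.mtopology M d"
proof -
  interpret D: Metric_space M d
    by (rule assms(1))
  interpret D': Metric_space M d'
    by (rule assms(2))
  have "D.mball x r \<subseteq> D'.mball x r" for x r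
    using upper by fastforce
  moreover have "D'.mball x (c * r) \<subseteq> D.mball x r" for x r
  proof
    fix y assume "y \<in> D'.mball x (c * r)"
    then have "x \<in> M" "y \<in> M" "c * d x y < c * r"
      using lower[of x y] by auto
    then show "y \<in> D.mball x r"
      using \<open>0 < c\<close> by simp
  qed
  ultimately have "(\<exists>r>0. D'.mball x r \<subseteq> U) \<longleftrightarrow> (\<exists>r>0. D.mball x r \<subseteq> U)" for x U
    using \<open>0 < c\<close> by (meson mult_pos_pos order_trans)
  then show ?thesis
    unfolding topology_eq D.openin_mtopology D'.openin_mtopology by blast
qed

lemma Lipschitz_equivalent_mcomplete:
  assumes "Metric_space M d" "Metric_space M d'" "0 < c"
    and lower: "\<And>x y. x \<in> M \<Longrightarrow> y \<in> M \<Longrightarrow> c * d x y \<le> d' x y"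
    and upper: "\<And>x y. x \<in> M \<Longrightarrow> y \<in> M \<Longrightarrow> d' x y \<le> d x y"
    and "Metric_space.mcomplete M d"
  shows "Metric_space.mcomplete M d'"
proof -
  interpret D: Metric_space M d
    by (rule assms(1))
  interpret D': Metric_space M d'
    by (rule assms(2))
  have "D.MCauchy \<sigma>" if Cauchy: "D'.MCauchy \<sigma>" for \<sigma>
    unfolding D.MCauchy_def
  proof (intro conjI allI impI)
    show "range \<sigma> \<subseteq> M"
      using Cauchy by (simp add: D'.MCauchy_def)
    fix e :: real assume "0 < e"
    then obtain N where "\<forall>n n'. N \<le> n \<longrightarrow> N \<le> n' \<longrightarrow> d' (\<sigma> n) (\<sigma> n') < c * e"
      using Cauchy \<open>0 < c\<close> unfolding D'.MCauchy_def by (meson mult_pos_pos)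
    then have "\<forall>n n'. N \<le> n \<longrightarrow> N \<le> n' \<longrightarrow> d (\<sigma> n) (\<sigma> n') < e"
      using lower \<open>range \<sigma> \<subseteq> M\<close> \<open>0 < c\<close>
      by (meson mult_less_cancel_left_pos order_le_less_trans rangeI subsetD)
    then show "\<exists>N. \<forall>n n'. N \<le> n \<longrightarrow> N \<le> n' \<longrightarrow> d (\<sigma> n) (\<sigma> n') < e"
      by blast
  qed
  then show ?thesis
    using \<open>D.mcomplete\<close> Lipschitz_equivalent_mtopology_eq[OF assms(1-5)]
    unfolding D.mcomplete_def D'.mcomplete_def by auto
qed

section \<open>Cells of a separable metric space\<close>

locale dense_sequence = Metric_space M d for M :: "'a set" and d +
  fixes D :: "nat \<Rightarrow> 'a"
  assumes dense_sequence_in: "D j \<in> M"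
    and dense_sequence_approx: "x \<in> M \<Longrightarrow> 0 < e \<Longrightarrow> \<exists>j. d x (D j) < e"
begin

definition first_center :: "nat \<Rightarrow> 'a \<Rightarrow> nat" where
  "first_center i x = (LEAST j. d x (D j) < 1 / 2 ^ i)"

definition address :: "'a \<Rightarrow> nat \<Rightarrow> nat list" where
  "address x n = map (\<lambda>i. first_center i x) [0..<n]"

definition cell :: "nat list \<Rightarrow> 'a set" where
  "cell \<tau> = {x \<in> M. address x (length \<tau>) = \<tau>}"

lemma first_center_dist: "x \<in> M \<Longrightarrow> d x (D (first_center i x)) < 1 / 2 ^ i"
  unfolding first_center_def
  by (rule LeastI_ex) (use dense_sequence_approx[of x "1 / 2 ^ i"] in auto)

lemma first_center_eq_iff:
  assumes "x \<in> M"
  shows "first_center i x = j \<longleftrightarrow> d x (D j) < 1 / 2 ^ i \<and> (\<forall>j'<j. \<not> d x (D j') < 1 / 2 ^ i)"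
proof
  assume "first_center i x = j"
  then show "d x (D j) < 1 / 2 ^ i \<and> (\<forall>j'<j. \<not> d x (D j') < 1 / 2 ^ i)"
    using first_center_dist[OF assms, of i] not_less_Least unfolding first_center_def by blast
next
  assume "d x (D j) < 1 / 2 ^ i \<and> (\<forall>j'<j. \<not> d x (D j') < 1 / 2 ^ i)"
  then show "first_center i x = j"
    unfolding first_center_def by (intro Least_equality) (auto simp: not_less[symmetric])
qed

lemma length_address [simp]: "length (address x n) = n"
  by (simp add: address_def)

lemma address_Suc: "address x (Suc n) = address x n @ [first_center n x]"
  by (simp add: address_def)

lemma address_take: "m \<le> n \<Longrightarrow> address x m = take m (address x n)"
  by (simp add: address_def take_map min_def)

lemma cell_Nil [simp]: "cell [] = M"
  by (simp add: cell_def address_def)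

lemma cell_snoc: "cell (\<tau> @ [j]) = cell \<tau> \<inter> {x \<in> M. first_center (length \<tau>) x = j}"
  unfolding cell_def by (auto simp: address_Suc)

lemma cell_subset: "cell \<tau> \<subseteq> M"
  by (auto simp: cell_def)

lemma mem_cell_address: "x \<in> M \<Longrightarrow> x \<in> cell (address x n)"
  by (simp add: cell_def)

lemma cell_take_subset: "cell \<tau> \<subseteq> cell (take m \<tau>)"
proof
  fix x assume "x \<in> cell \<tau>"
  then have x: "x \<in> M" "address x (length \<tau>) = \<tau>"
    by (auto simp: cell_def)
  have "address x (min (length \<tau>) m) = take (min (length \<tau>) m) \<tau>"
    using address_take[of "min (length \<tau>) m" "length \<tau>" x] x(2) by simp
  then show "x \<in> cell (take m \<tau>)"
    using x(1) by (simp add: cell_def min_def split: if_splits)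
qed

lemma cell_address_antimono: "k \<le> m \<Longrightarrow> cell (address x m) \<subseteq> cell (address x k)"
  using cell_take_subset[of "address x m" k] address_take[of k m x] by simp

lemma disjoint_family_cell_children: "disjoint_family (\<lambda>j. cell (\<tau> @ [j]))"
  unfolding disjoint_family_on_def cell_snoc by auto

lemma Union_cell_children: "(\<Union>j. cell (\<tau> @ [j])) = cell \<tau>"
  unfolding cell_snoc using cell_subset by auto

lemma cell_dist:
  assumes "x \<in> cell \<tau>" "y \<in> cell \<tau>" "length \<tau> = Suc k"
  shows "d x y < 2 / 2 ^ k"
proof -
  have "x \<in> M" "y \<in> M" "first_center k x = \<tau> ! k" "first_center k y = \<tau> ! k"
    using assms by (auto simp: cell_def address_def simp del: upt_Suc)
  then have "d x (D (\<tau> ! k)) < 1 / 2 ^ k" "d y (D (\<tau> ! k)) < 1 / 2 ^ k"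
    using first_center_dist by metis+
  then show ?thesis
    using triangle[of x "D (\<tau> ! k)" y] commute[of y] \<open>x \<in> M\<close> \<open>y \<in> M\<close> dense_sequence_in by simp
qed

text \<open>Deep cells describe an open set through addresses alone, which can be read off both on
  the space and, via interval addresses, on \<open>[0,1)\<close>.\<close>

definition deep_addresses :: "'a set \<Rightarrow> nat \<Rightarrow> nat list set" where
  "deep_addresses U k = {\<tau>. \<forall>y\<in>cell \<tau>. \<forall>z\<in>M. d y z \<le> 2 / 2 ^ k \<longrightarrow> z \<in> U}"

lemma deep_addresses_Suc:
  assumes "\<tau> \<in> deep_addresses U k" "cell \<tau>' \<subseteq> cell \<tau>"
  shows "\<tau>' \<in> deep_addresses U (Suc k)"
proof -
  have "2 / 2 ^ Suc k \<le> (2::real) / 2 ^ k"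
    by (intro divide_left_mono) auto
  then show ?thesis
    using assms unfolding deep_addresses_def by fastforce
qed

lemma openin_mcball_power2:
  assumes "openin mtopology U" "x \<in> U"
  obtains k where "mcball x (4 / 2 ^ k) \<subseteq> U"
proof -
  obtain r where "r > 0" "mball x r \<subseteq> U"
    using assms unfolding openin_mtopology by blast
  moreover obtain k where "4 / 2 ^ k < r"
    using exists_divide_power2_less[OF \<open>r > 0\<close>] by blast
  ultimately show ?thesis
    using mcball_subset_mball_concentric that by blast
qed

lemma open_eq_Union_deep_cells:
  assumes U: "openin mtopology U"
  shows "U = (\<Union>k. {x \<in> M. address x (Suc k) \<in> deep_addresses U k})"
proof (intro set_eqI iffI)
  fix x assume "x \<in> U"
  then have x: "x \<in> M"
    using U openin_subset by fastforce
  obtain k where k: "mcball x (4 / 2 ^ k) \<subseteq> U"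
    using openin_mcball_power2[OF U \<open>x \<in> U\<close>] .
  have "z \<in> U" if "y \<in> cell (address x (Suc k))" "z \<in> M" "d y z \<le> 2 / 2 ^ k" for y z
  proof -
    have "d x y < 2 / 2 ^ k" "y \<in> M"
      using cell_dist[OF mem_cell_address[OF x] that(1)] that(1) cell_subset by auto
    then have "d x z \<le> 4 / 2 ^ k"
      using triangle[of x y z] x that by simp
    then show ?thesis
      using k x \<open>z \<in> M\<close> by auto
  qed
  then show "x \<in> (\<Union>k. {x \<in> M. address x (Suc k) \<in> deep_addresses U k})"
    using x by (auto simp: deep_addresses_def)
next
  fix x assume "x \<in> (\<Union>k. {x \<in> M. address x (Suc k) \<in> deep_addresses U k})"
  then show "x \<in> U"
    using mem_cell_address unfolding deep_addresses_def by fastforce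
qed

end

lemma (in Metric_space) dense_sequence_exists:
  assumes "separable_space mtopology" "M \<noteq> {}"
  obtains D where "dense_sequence M d D"
proof -
  obtain C where C: "countable C" "C \<subseteq> M" "mtopology closure_of C = M"
    using assms(1) unfolding separable_space_def by auto
  with assms(2) have "C \<noteq> {}"
    by auto
  define D where "D = from_nat_into C"
  have "D j \<in> M" for j
    using from_nat_into[OF \<open>C \<noteq> {}\<close>] C(2) by (auto simp: D_def)
  moreover have "\<exists>j. d x (D j) < e" if x: "x \<in> M" and e: "0 < e" for x e
  proof -
    have "x \<in> mtopology closure_of C"
      using C(3) x by simp
    then obtain y where "y \<in> C" "y \<in> mball x e"
      using e unfolding metric_closure_of by blast
    moreover obtain j where "y = D j"
      using \<open>y \<in> C\<close> range_from_nat_into[OF \<open>C \<noteq> {}\<close> C(1)] by (metis D_def rangeE)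
    ultimately show ?thesis
      by auto
  qed
  ultimately have "dense_sequence M d D"
    using Metric_space_axioms by (simp add: dense_sequence_def dense_sequence_axioms_def)
  then show ?thesis
    by (rule that)
qed

section \<open>Parameters of mm-spaces\<close>

locale polish_prob_space = dense_sequence M d D + P: prob_space \<mu>
  for M :: "'a set" and d D and \<mu> :: "'a measure" +
  assumes space_eq: "space \<mu> = M"
    and sets_eq: "sets \<mu> = sigma_sets M {U. openin mtopology U}"
    and complete: "mcomplete"
begin

definition cell_mass :: "nat list \<Rightarrow> real" where
  "cell_mass \<tau> = measure \<mu> (cell \<tau>)"

text \<open>Ordering the cells of each level lexicographically, cell \<open>\<tau>\<close> is matched with the
  interval \<open>[cell_offset \<tau>, cell_offset \<tau> + cell_mass \<tau>)\<close>; these intervals partition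
  \<open>[0,1)\<close> at every level and are nested along prefixes.\<close>

definition cell_offset :: "nat list \<Rightarrow> real" where
  "cell_offset \<tau> = (\<Sum>i<length \<tau>. \<Sum>j<\<tau> ! i. cell_mass (take i \<tau> @ [j]))"

lemma openin_sets: "openin mtopology U \<Longrightarrow> U \<in> sets \<mu>"
  unfolding sets_eq by (rule sigma_sets.Basic) simp

lemma first_center_sets: "{x \<in> M. first_center i x = j} \<in> sets \<mu>"
proof -
  have "{x \<in> M. first_center i x = j} =
      mball (D j) (1 / 2 ^ i) - (\<Union>j'\<in>{..<j}. mball (D j') (1 / 2 ^ i))"
  proof (rule set_eqI)
    fix x
    show "x \<in> {x \<in> M. first_center i x = j} \<longleftrightarrow>
        x \<in> mball (D j) (1 / 2 ^ i) - (\<Union>j'\<in>{..<j}. mball (D j') (1 / 2 ^ i))"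
      using dense_sequence_in by (cases "x \<in> M") (auto simp: first_center_eq_iff commute)
  qed
  also have "\<dots> \<in> sets \<mu>"
    using openin_sets[OF openin_mball] by (intro sets.Diff sets.finite_UN) auto
  finally show ?thesis .
qed

lemma cell_sets: "cell \<tau> \<in> sets \<mu>"
proof (induction \<tau> rule: rev_induct)
  case Nil
  show ?case
    using sets.top[of \<mu>] space_eq by simp
next
  case (snoc j \<tau>)
  then show ?case
    unfolding cell_snoc using first_center_sets by (rule sets.Int)
qed

lemma cell_mass_nonneg: "0 \<le> cell_mass \<tau>"
  by (simp add: cell_mass_def)

lemma cell_mass_Nil: "cell_mass [] = 1"
  using P.prob_space space_eq by (simp add: cell_mass_def)

lemma cell_mass_children_sums: "(\<lambda>j. cell_mass (\<tau> @ [j])) sums cell_mass \<tau>"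
  using P.finite_measure_UNION[OF _ disjoint_family_cell_children, of \<tau>] cell_sets
  unfolding cell_mass_def Union_cell_children by auto

lemma cell_offset_snoc: "cell_offset (\<tau> @ [j]) = cell_offset \<tau> + (\<Sum>j'<j. cell_mass (\<tau> @ [j']))"
proof -
  have "cell_offset (\<tau> @ [j]) =
      (\<Sum>i<length \<tau>. \<Sum>j'<(\<tau> @ [j]) ! i. cell_mass (take i (\<tau> @ [j]) @ [j'])) +
      (\<Sum>j'<(\<tau> @ [j]) ! length \<tau>. cell_mass (take (length \<tau>) (\<tau> @ [j]) @ [j']))"
    by (simp add: cell_offset_def del: nth_append_length)
  also have "(\<Sum>i<length \<tau>. \<Sum>j'<(\<tau> @ [j]) ! i. cell_mass (take i (\<tau> @ [j]) @ [j'])) =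
      cell_offset \<tau>"
    unfolding cell_offset_def by (intro sum.cong refl) (simp_all add: nth_append)
  finally show ?thesis
    by simp
qed

lemma cell_offset_Suc_child:
  "cell_offset (\<tau> @ [Suc j]) = cell_offset (\<tau> @ [j]) + cell_mass (\<tau> @ [j])"
  by (simp add: cell_offset_snoc)

lemma incseq_cell_offset_children: "incseq (\<lambda>j. cell_offset (\<tau> @ [j]))"
  by (rule incseq_SucI) (simp add: cell_offset_Suc_child cell_mass_nonneg)

lemma cell_offset_children_tendsto:
  "(\<lambda>j. cell_offset (\<tau> @ [j])) \<longlonglongrightarrow> cell_offset \<tau> + cell_mass \<tau>"
  using tendsto_add[OF tendsto_const cell_mass_children_sums[of \<tau>, unfolded sums_def]]
  by (simp add: cell_offset_snoc)

lemma cell_offset_child_bounds: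
  "cell_offset \<tau> \<le> cell_offset (\<tau> @ [j])"
  "cell_offset (\<tau> @ [j]) + cell_mass (\<tau> @ [j]) \<le> cell_offset \<tau> + cell_mass \<tau>"
proof -
  show "cell_offset \<tau> \<le> cell_offset (\<tau> @ [j])"
    using incseqD[OF incseq_cell_offset_children[of \<tau>], of 0 j] by (simp add: cell_offset_snoc)
  show "cell_offset (\<tau> @ [j]) + cell_mass (\<tau> @ [j]) \<le> cell_offset \<tau> + cell_mass \<tau>"
    using incseq_le[OF incseq_cell_offset_children[of \<tau>] cell_offset_children_tendsto, of "Suc j"]
    by (simp add: cell_offset_Suc_child)
qed

lemma cell_offset_nonneg: "0 \<le> cell_offset \<tau>"
  unfolding cell_offset_def by (intro sum_nonneg) (simp add: cell_mass_nonneg)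

lemma cell_offset_add_mass_le: "cell_offset \<tau> + cell_mass \<tau> \<le> 1"
proof (induction \<tau> rule: rev_induct)
  case (snoc j \<tau>)
  then show ?case
    using cell_offset_child_bounds(2)[of \<tau> j] by simp
qed (simp add: cell_mass_Nil cell_offset_def)

text \<open>\<open>cell_offset (\<tau> @ [Suc j])\<close> is the right end of the interval of child \<open>j\<close> of \<open>\<tau>\<close>.\<close>

primrec interval_address :: "real \<Rightarrow> nat \<Rightarrow> nat list" where
  "interval_address s 0 = []"
| "interval_address s (Suc n) = interval_address s n @
     [LEAST j. s < cell_offset (interval_address s n @ [Suc j])]"

lemma length_interval_address [simp]: "length (interval_address s n) = n"
  by (induction n) auto

lemma take_interval_address: "m \<le> n \<Longrightarrow> take m (interval_address s n) = interval_address s m"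
  by (induction n) (auto simp: le_Suc_eq)

lemma interval_address_eq_iff:
  assumes "s \<in> {0..<1}"
  shows "interval_address s n = \<tau> \<longleftrightarrow>
    length \<tau> = n \<and> cell_offset \<tau> \<le> s \<and> s < cell_offset \<tau> + cell_mass \<tau>"
proof (induction n arbitrary: \<tau>)
  case 0
  then show ?case
    using assms by (auto simp: cell_mass_Nil cell_offset_def)
next
  case (Suc n)
  have step: "(LEAST j. s < cell_offset (\<sigma> @ [Suc j])) = j \<longleftrightarrow>
      cell_offset (\<sigma> @ [j]) \<le> s \<and> s < cell_offset (\<sigma> @ [j]) + cell_mass (\<sigma> @ [j])"
    if "cell_offset \<sigma> \<le> s" "s < cell_offset \<sigma> + cell_mass \<sigma>" for \<sigma> j
  proof -
    have "\<exists>n. s < cell_offset (\<sigma> @ [n])"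
      using order_tendstoD(1)[OF cell_offset_children_tendsto that(2)]
      by (auto simp: eventually_sequentially)
    then show ?thesis
      using Least_threshold_incseq_eq_iff[OF incseq_cell_offset_children, of \<sigma> s j] that
      by (simp add: cell_offset_Suc_child cell_offset_snoc add.assoc)
  qed
  show ?case
  proof
    assume "interval_address s (Suc n) = \<tau>"
    then show "length \<tau> = Suc n \<and> cell_offset \<tau> \<le> s \<and> s < cell_offset \<tau> + cell_mass \<tau>"
      using step Suc.IH[of "interval_address s n"] by auto
  next
    assume bounds: "length \<tau> = Suc n \<and> cell_offset \<tau> \<le> s \<and> s < cell_offset \<tau> + cell_mass \<tau>"
    then obtain \<sigma> j where \<tau>: "\<tau> = \<sigma> @ [j]"
      by (metis length_Suc_conv_rev)
    have "cell_offset \<sigma> \<le> s" "s < cell_offset \<sigma> + cell_mass \<sigma>"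
      using bounds cell_offset_child_bounds[of \<sigma> j] unfolding \<tau> by linarith+
    moreover have "interval_address s n = \<sigma>"
      using Suc.IH bounds calculation \<tau> by simp
    ultimately show "interval_address s (Suc n) = \<tau>"
      using step bounds \<tau> by simp
  qed
qed

lemma interval_address_preimage:
  "{s \<in> {0..<1}. interval_address s n = \<tau>} =
    (if length \<tau> = n then {cell_offset \<tau>..<cell_offset \<tau> + cell_mass \<tau>} else {})"
  using interval_address_eq_iff cell_offset_nonneg[of \<tau>] cell_offset_add_mass_le[of \<tau>] by auto

lemma cell_interval_address_nonempty: "s \<in> {0..<1} \<Longrightarrow> cell (interval_address s n) \<noteq> {}"
  using interval_address_eq_iff[of s n "interval_address s n"] by (auto simp: cell_mass_def)

lemma cell_interval_address_antimono:
  "k \<le> m \<Longrightarrow> cell (interval_address s m) \<subseteq> cell (interval_address s k)"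
  using cell_take_subset[of "interval_address s m" k] take_interval_address[of k m s] by simp

lemma measurable_interval_address:
  "(\<lambda>s. interval_address s n) \<in> measurable unit_lebesgue (count_space UNIV)"
proof (subst measurable_count_space_eq2_countable, intro conjI ballI)
  fix \<tau> :: "nat list"
  have "(\<lambda>s. interval_address s n) -` {\<tau>} \<inter> space unit_lebesgue =
      {s \<in> {0..<1}. interval_address s n = \<tau>}"
    by auto
  also have "\<dots> \<in> sets unit_lebesgue"
    unfolding interval_address_preimage
    using cell_offset_nonneg[of \<tau>] cell_offset_add_mass_le[of \<tau>] by (auto intro!: sets_unit_lebesgueI)
  finally show "(\<lambda>s. interval_address s n) -` {\<tau>} \<inter> space unit_lebesgue \<in> sets unit_lebesgue" .
qed auto

lemma address_preimage:
  "(\<lambda>x. address x n) -` {\<tau>} \<inter> space \<mu> = (if length \<tau> = n then cell \<tau> else {})"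
  using space_eq by (auto simp: cell_def)

lemma measurable_address: "(\<lambda>x. address x n) \<in> measurable \<mu> (count_space UNIV)"
  by (subst measurable_count_space_eq2_countable) (auto simp: address_preimage cell_sets)

lemma interval_address_sets: "{s \<in> {0..<1}. interval_address s n \<in> A} \<in> sets unit_lebesgue"
proof -
  have "{s \<in> {0..<1}. interval_address s n \<in> A} =
      (\<lambda>s. interval_address s n) -` A \<inter> space unit_lebesgue"
    by auto
  then show ?thesis
    using measurable_sets[OF measurable_interval_address, of A n] by simp
qed

lemma address_sets: "{x \<in> M. address x n \<in> A} \<in> sets \<mu>"
proof -
  have "{x \<in> M. address x n \<in> A} = (\<lambda>x. address x n) -` A \<inter> space \<mu>"
    using space_eq by auto
  then show ?thesis
    using measurable_sets[OF measurable_address, of A n] by simp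
qed

lemma distr_interval_address:
  "distr unit_lebesgue (count_space UNIV) (\<lambda>s. interval_address s n) =
    distr \<mu> (count_space UNIV) (\<lambda>x. address x n)"
proof (rule measure_eqI_countable[where A=UNIV])
  fix \<tau> :: "nat list"
  have "emeasure (distr unit_lebesgue (count_space UNIV) (\<lambda>s. interval_address s n)) {\<tau>} =
      emeasure unit_lebesgue {s \<in> {0..<1}. interval_address s n = \<tau>}"
    by (subst emeasure_distr[OF measurable_interval_address])
      (auto intro!: arg_cong[where f="emeasure unit_lebesgue"])
  also have "\<dots> = emeasure \<mu> (if length \<tau> = n then cell \<tau> else {})"
    unfolding interval_address_preimage
    using cell_offset_nonneg[of \<tau>] cell_offset_add_mass_le[of \<tau>] cell_mass_nonneg[of \<tau>]
    by (auto simp: emeasure_unit_lebesgue cell_mass_def P.emeasure_eq_measure)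
  also have "\<dots> = emeasure (distr \<mu> (count_space UNIV) (\<lambda>x. address x n)) {\<tau>}"
    by (simp add: emeasure_distr[OF measurable_address] address_preimage)
  finally show "emeasure (distr unit_lebesgue (count_space UNIV) (\<lambda>s. interval_address s n)) {\<tau>} =
      emeasure (distr \<mu> (count_space UNIV) (\<lambda>x. address x n)) {\<tau>}" .
qed auto

lemma emeasure_interval_address_in:
  "emeasure unit_lebesgue {s \<in> {0..<1}. interval_address s n \<in> A} =
    emeasure \<mu> {x \<in> M. address x n \<in> A}"
proof -
  have "emeasure unit_lebesgue {s \<in> {0..<1}. interval_address s n \<in> A} =
      emeasure (distr unit_lebesgue (count_space UNIV) (\<lambda>s. interval_address s n)) A"
    by (subst emeasure_distr[OF measurable_interval_address])
      (auto intro!: arg_cong[where f="emeasure unit_lebesgue"])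
  also have "\<dots> = emeasure \<mu> {x \<in> M. address x n \<in> A}"
    by (simp add: distr_interval_address emeasure_distr[OF measurable_address] space_eq vimage_def
        Int_def conj_commute)
  finally show ?thesis .
qed

definition cell_point :: "real \<Rightarrow> nat \<Rightarrow> 'a" where
  "cell_point s n = (SOME x. x \<in> cell (interval_address s n))"

definition canonical_parameter :: "real \<Rightarrow> 'a" where
  "canonical_parameter s = (SOME l. limitin mtopology (cell_point s) l sequentially)"

lemma cell_point_in: "s \<in> {0..<1} \<Longrightarrow> cell_point s n \<in> cell (interval_address s n)"
  unfolding cell_point_def using cell_interval_address_nonempty[of s n] by (simp add: some_in_eq)

lemma cell_point_dist:
  assumes "s \<in> {0..<1}" "Suc k \<le> m" "y \<in> cell (interval_address s (Suc k))"
  shows "d y (cell_point s m) < 2 / 2 ^ k"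
  using assms cell_point_in[of s m] cell_interval_address_antimono[of "Suc k" m s]
    cell_dist[of y "interval_address s (Suc k)" "cell_point s m" k] by auto

lemma MCauchy_cell_point:
  assumes s: "s \<in> {0..<1}"
  shows "MCauchy (cell_point s)"
  unfolding MCauchy_def
proof (intro conjI allI impI)
  show "range (cell_point s) \<subseteq> M"
    using cell_point_in[OF s] cell_subset by blast
  fix e :: real assume "0 < e"
  then obtain k where k: "2 / 2 ^ k < e"
    using exists_divide_power2_less by blast
  have "d (cell_point s n) (cell_point s n') < e" if "Suc k \<le> n" "Suc k \<le> n'" for n n'
    using cell_point_in[OF s, of n] cell_interval_address_antimono[OF that(1), of s]
      cell_point_dist[OF s that(2)] k by fastforce
  then show "\<exists>N. \<forall>n n'. N \<le> n \<longrightarrow> N \<le> n' \<longrightarrow> d (cell_point s n) (cell_point s n') < e"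
    by blast
qed

lemma canonical_parameter_limit:
  "s \<in> {0..<1} \<Longrightarrow> limitin mtopology (cell_point s) (canonical_parameter s) sequentially"
  unfolding canonical_parameter_def using complete MCauchy_cell_point[of s]
  unfolding mcomplete_def by (metis someI_ex)

lemma canonical_parameter_in: "s \<in> {0..<1} \<Longrightarrow> canonical_parameter s \<in> M"
  using canonical_parameter_limit limitin_mspace by blast

lemma canonical_parameter_dist:
  assumes s: "s \<in> {0..<1}" and y: "y \<in> cell (interval_address s (Suc k))"
  shows "d y (canonical_parameter s) \<le> 2 / 2 ^ k"
proof (rule field_le_epsilon)
  fix e :: real assume "0 < e"
  obtain N where N: "\<forall>n\<ge>N. cell_point s n \<in> M \<and> d (cell_point s n) (canonical_parameter s) < e"
    using canonical_parameter_limit[OF s] \<open>0 < e\<close> unfolding limit_metric_sequentially by blast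
  define m where "m = max N (Suc k)"
  have "d (cell_point s m) (canonical_parameter s) < e" "cell_point s m \<in> M" "y \<in> M"
    using N y cell_subset by (auto simp: m_def)
  moreover have "d y (cell_point s m) < 2 / 2 ^ k"
    using cell_point_dist[OF s _ y] by (simp add: m_def)
  ultimately show "d y (canonical_parameter s) \<le> 2 / 2 ^ k + e"
    using triangle[of y "cell_point s m" "canonical_parameter s"] canonical_parameter_in[OF s] by simp
qed

lemma canonical_parameter_preimage_open:
  assumes U: "openin mtopology U"
  shows "{s \<in> {0..<1}. canonical_parameter s \<in> U} =
    (\<Union>k. {s \<in> {0..<1}. interval_address s (Suc k) \<in> deep_addresses U k})"
proof (intro set_eqI iffI)
  fix s assume "s \<in> {s \<in> {0..<1}. canonical_parameter s \<in> U}"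
  then have s: "s \<in> {0..<1}" and "canonical_parameter s \<in> U"
    by auto
  then obtain k where k: "mcball (canonical_parameter s) (4 / 2 ^ k) \<subseteq> U"
    using openin_mcball_power2[OF U] by blast
  have "z \<in> U" if "y \<in> cell (interval_address s (Suc k))" "z \<in> M" "d y z \<le> 2 / 2 ^ k" for y z
  proof -
    have "d (canonical_parameter s) z \<le> 4 / 2 ^ k"
      using canonical_parameter_dist[OF s that(1)] triangle[of "canonical_parameter s" y z]
        canonical_parameter_in[OF s] that cell_subset commute[of y] by fastforce
    then show ?thesis
      using k canonical_parameter_in[OF s] \<open>z \<in> M\<close> by auto
  qed
  then show "s \<in> (\<Union>k. {s \<in> {0..<1}. interval_address s (Suc k) \<in> deep_addresses U k})"
    using s by (auto simp: deep_addresses_def)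
next
  fix s assume "s \<in> (\<Union>k. {s \<in> {0..<1}. interval_address s (Suc k) \<in> deep_addresses U k})"
  then obtain k where s: "s \<in> {0..<1}" and deep: "interval_address s (Suc k) \<in> deep_addresses U k"
    by auto
  obtain y where "y \<in> cell (interval_address s (Suc k))"
    using cell_interval_address_nonempty[OF s] by blast
  then show "s \<in> {s \<in> {0..<1}. canonical_parameter s \<in> U}"
    using deep canonical_parameter_dist[OF s] canonical_parameter_in[OF s] s
    unfolding deep_addresses_def by blast
qed

lemma measurable_canonical_parameter: "canonical_parameter \<in> measurable unit_lebesgue \<mu>"
proof (rule measurable_sigma_sets[OF sets_eq])
  show "{U. openin mtopology U} \<subseteq> Pow M"
    using openin_subset by fastforce
  show "canonical_parameter \<in> space unit_lebesgue \<rightarrow> M"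
    using canonical_parameter_in by simp
  fix U assume "U \<in> {U. openin mtopology U}"
  then have U: "openin mtopology U"
    by simp
  have "canonical_parameter -` U \<inter> space unit_lebesgue =
      (\<Union>k. {s \<in> {0..<1}. interval_address s (Suc k) \<in> deep_addresses U k})"
    unfolding canonical_parameter_preimage_open[OF U, symmetric] by auto
  also have "\<dots> \<in> sets unit_lebesgue"
    by (intro sets.countable_UN image_subsetI interval_address_sets)
  finally show "canonical_parameter -` U \<inter> space unit_lebesgue \<in> sets unit_lebesgue" .
qed

lemma emeasure_canonical_parameter_preimage_open:
  assumes U: "openin mtopology U"
  shows "emeasure unit_lebesgue {s \<in> {0..<1}. canonical_parameter s \<in> U} = emeasure \<mu> U"
proof -
  define E where "E k = {s \<in> {0..<1}. interval_address s (Suc k) \<in> deep_addresses U k}" for k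
  define G where "G k = {x \<in> M. address x (Suc k) \<in> deep_addresses U k}" for k
  have E_sets: "range E \<subseteq> sets unit_lebesgue"
    unfolding E_def by (intro image_subsetI interval_address_sets)
  have G_sets: "range G \<subseteq> sets \<mu>"
    unfolding G_def by (intro image_subsetI address_sets)
  have "incseq E"
    using deep_addresses_Suc cell_interval_address_antimono[of "Suc k" "Suc (Suc k)" for k]
    by (intro incseq_SucI) (auto simp: E_def)
  have "incseq G"
    using deep_addresses_Suc cell_address_antimono[of "Suc k" "Suc (Suc k)" for k]
    by (intro incseq_SucI) (auto simp: G_def)
  have "emeasure unit_lebesgue {s \<in> {0..<1}. canonical_parameter s \<in> U} =
      emeasure unit_lebesgue (\<Union>k. E k)"
    unfolding E_def canonical_parameter_preimage_open[OF U] ..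
  also have "\<dots> = (SUP k. emeasure unit_lebesgue (E k))"
    by (rule SUP_emeasure_incseq[OF E_sets \<open>incseq E\<close>, symmetric])
  also have "\<dots> = (SUP k. emeasure \<mu> (G k))"
    unfolding E_def G_def emeasure_interval_address_in ..
  also have "\<dots> = emeasure \<mu> (\<Union>k. G k)"
    by (rule SUP_emeasure_incseq[OF G_sets \<open>incseq G\<close>])
  also have "(\<Union>k. G k) = U"
    unfolding G_def by (rule open_eq_Union_deep_cells[OF U, symmetric])
  finally show ?thesis .
qed

lemma distr_canonical_parameter: "distr unit_lebesgue \<mu> canonical_parameter = \<mu>"
proof (rule measure_eqI_generator_eq[where \<Omega>=M and E="{U. openin mtopology U}" and A="\<lambda>i. M"])
  show "Int_stable {U. openin mtopology U}"
    by (auto simp: Int_stable_def)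
  show "{U. openin mtopology U} \<subseteq> Pow M"
    using openin_subset by fastforce
  show "sets (distr unit_lebesgue \<mu> canonical_parameter) = sigma_sets M {U. openin mtopology U}"
    "sets \<mu> = sigma_sets M {U. openin mtopology U}"
    by (simp_all add: sets_eq)
  have open_eq: "emeasure (distr unit_lebesgue \<mu> canonical_parameter) U = emeasure \<mu> U"
    if U: "openin mtopology U" for U
  proof -
    have "emeasure (distr unit_lebesgue \<mu> canonical_parameter) U =
        emeasure unit_lebesgue {s \<in> {0..<1}. canonical_parameter s \<in> U}"
      using U by (subst emeasure_distr[OF measurable_canonical_parameter openin_sets])
        (auto intro!: arg_cong[where f="emeasure unit_lebesgue"])
    then show ?thesis
      using emeasure_canonical_parameter_preimage_open[OF U] by simp
  qed
  then show "emeasure (distr unit_lebesgue \<mu> canonical_parameter) U = emeasure \<mu> U"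
    if "U \<in> {U. openin mtopology U}" for U
    using that by simp
  show "range (\<lambda>i. M) \<subseteq> {U. openin mtopology U}" "(\<Union>i. M) = M"
    by auto
  show "emeasure (distr unit_lebesgue \<mu> canonical_parameter) M \<noteq> \<infinity>"
    using open_eq[OF openin_topspace[of mtopology, unfolded topspace_mtopology]] space_eq
    by (simp add: P.emeasure_space_1)
qed

end

lemma mm_space_has_parameter:
  assumes "mm_space X"
  obtains \<psi> where "parameter X \<psi>"
proof -
  let ?M = "space (snd X)" and ?d = "fst X"
  have metric: "Metric_space ?M ?d" and complete: "Metric_space.mcomplete ?M ?d"
    and separable: "separable_space (Metric_space.mtopology ?M ?d)"
    and sets: "sets (snd X) = sigma_sets ?M {U. openin (Metric_space.mtopology ?M ?d) U}"
    and prob: "prob_space (snd X)"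
    using assms unfolding mm_space_def Let_def by auto
  obtain D where "dense_sequence ?M ?d D"
    using Metric_space.dense_sequence_exists[OF metric separable] prob_space.not_empty[OF prob]
    by blast
  then interpret polish_prob_space ?M ?d D "snd X"
    unfolding polish_prob_space_def polish_prob_space_axioms_def
    using complete sets prob by simp
  show ?thesis
    using that measurable_canonical_parameter distr_canonical_parameter
    unfolding parameter_def by blast
qed

lemma box_dist_le:
  assumes "parameter X \<phi>" "parameter Y \<psi>" "I \<in> sets unit_lebesgue"
    and "1 - \<epsilon> \<le> measure unit_lebesgue I" "0 \<le> \<epsilon>"
    and "\<And>s t. s \<in> I \<Longrightarrow> t \<in> I \<Longrightarrow> \<bar>fst X (\<phi> s) (\<phi> t) - fst Y (\<psi> s) (\<psi> t)\<bar> \<le> \<epsilon>"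
  shows "box_dist X Y \<le> \<epsilon>" and "0 \<le> box_dist X Y"
proof -
  let ?S = "{\<epsilon>. \<epsilon> \<ge> 0 \<and> (\<exists>\<phi> \<psi> I0. parameter X \<phi> \<and> parameter Y \<psi> \<and>
       I0 \<in> sets unit_lebesgue \<and> measure unit_lebesgue I0 \<ge> 1 - \<epsilon> \<and>
       (\<forall>s\<in>I0. \<forall>t\<in>I0. \<bar>fst X (\<phi> s) (\<phi> t) - fst Y (\<psi> s) (\<psi> t)\<bar> \<le> \<epsilon>))}"
  have "\<epsilon> \<in> ?S"
    using assms by blast
  moreover have "bdd_below ?S"
    by (rule bdd_belowI[of _ 0]) auto
  ultimately show "box_dist X Y \<le> \<epsilon>"
    unfolding box_dist_def by (rule cInf_lower)
  show "0 \<le> box_dist X Y"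
    unfolding box_dist_def using \<open>\<epsilon> \<in> ?S\<close> by (intro cInf_greatest) auto
qed

lemma parameter_distr:
  assumes "parameter X \<psi>" "g \<in> measurable (snd X) (snd Y)" "distr (snd X) (snd Y) g = snd Y"
  shows "parameter Y (\<lambda>s. g (\<psi> s))"
proof -
  have "\<psi> \<in> measurable unit_lebesgue (snd X)" "distr unit_lebesgue (snd X) \<psi> = snd X"
    using assms(1) unfolding parameter_def by auto
  then show ?thesis
    using assms(2,3) distr_distr[OF assms(2)] measurable_comp[OF _ assms(2)]
    unfolding parameter_def comp_def by metis
qed

lemma parameter_bounded_on_large_set:
  assumes "mm_space X" "parameter X \<psi>" "0 < \<epsilon>"
  obtains R I where "0 \<le> R" "I \<in> sets unit_lebesgue" "1 - \<epsilon> \<le> measure unit_lebesgue I"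
    "\<And>s s'. s \<in> I \<Longrightarrow> s' \<in> I \<Longrightarrow> fst X (\<psi> s) (\<psi> s') \<le> R"
proof -
  let ?M = "space (snd X)" and ?d = "fst X"
  interpret Metric_space ?M ?d
    using assms(1) by (simp add: mm_space_def Let_def)
  interpret P: prob_space "snd X"
    using assms(1) by (simp add: mm_space_def Let_def)
  have \<psi>: "\<psi> \<in> measurable unit_lebesgue (snd X)" "distr unit_lebesgue (snd X) \<psi> = snd X"
    using assms(2) unfolding parameter_def by auto
  obtain x0 where x0: "x0 \<in> ?M"
    using P.not_empty by blast
  have balls: "range (\<lambda>n. mball x0 (real n)) \<subseteq> sets (snd X)"
    using assms(1) by (auto simp: mm_space_def Let_def intro: sigma_sets.Basic)
  have "(\<Union>n. mball x0 (real n)) = ?M"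
    using x0 reals_Archimedean2 by (auto simp: Let_def)
  then have "(\<lambda>n. measure (snd X) (mball x0 (real n))) \<longlonglongrightarrow> 1"
    using P.finite_Lim_measure_incseq[OF balls] P.prob_space
    by (simp add: incseq_def subset_eq)
  then obtain n where n: "1 - \<epsilon> < measure (snd X) (mball x0 (real n))"
    using order_tendstoD(1)[of _ 1 sequentially "1 - \<epsilon>"] assms(3)
    by (auto simp: eventually_sequentially)
  define I where "I = \<psi> -` mball x0 (real n) \<inter> space unit_lebesgue"
  show ?thesis
  proof
    show "I \<in> sets unit_lebesgue"
      unfolding I_def using balls by (intro measurable_sets[OF \<psi>(1)]) auto
    have "measure unit_lebesgue I = measure (snd X) (mball x0 (real n))"
      unfolding I_def using balls \<psi> by (subst measure_distr[symmetric]) auto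
    then show "1 - \<epsilon> \<le> measure unit_lebesgue I"
      using n by simp
    fix s s' assume "s \<in> I" "s' \<in> I"
    then show "?d (\<psi> s) (\<psi> s') \<le> 2 * real n"
      using triangle[of "\<psi> s" x0 "\<psi> s'"] commute[of "\<psi> s" x0] by (auto simp: I_def)
  qed simp
qed

section \<open>The interpolating spaces\<close>

lemma fst_interp: "fst (interp X0 X1 f t) x y = (1 - t) * fst X0 (f x) (f y) + t * fst X1 x y"
  by (simp add: interp_def)

lemma snd_interp [simp]: "snd (interp X0 X1 f t) = snd X1"
  by (simp add: interp_def)

lemma interp_dist_diff:
  "fst (interp X0 X1 f t) x y - fst (interp X0 X1 f s) x y =
    (t - s) * (fst X1 x y - fst X0 (f x) (f y))"
  by (simp add: interp_def algebra_simps)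

lemma mm_space_interp:
  assumes "mm_space X0" "mm_space X1" "lip1 X1 X0 f" "0 < t" "t \<le> 1"
  shows "mm_space (interp X0 X1 f t)"
proof -
  let ?M = "space (snd X1)" and ?d1 = "fst X1" and ?dt = "fst (interp X0 X1 f t)"
  have metric0: "Metric_space (space (snd X0)) (fst X0)"
    using assms(1) by (simp add: mm_space_def Let_def)
  have metric1: "Metric_space ?M ?d1"
    using assms(2) by (simp add: mm_space_def Let_def)
  have lip: "f \<in> ?M \<rightarrow> space (snd X0)" "\<And>x y. x \<in> ?M \<Longrightarrow> y \<in> ?M \<Longrightarrow> fst X0 (f x) (f y) \<le> ?d1 x y"
    using assms(3) by (auto simp: lip1_def)
  have metric_t: "Metric_space ?M ?dt"
    unfolding fst_interp[abs_def]
    using Metric_space_convex_combination[OF metric0 metric1 lip(1) assms(4,5)] .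
  have "t * ?d1 x y \<le> ?dt x y" for x y
    using Metric_space.nonneg[OF metric0, of "f x" "f y"] assms(5) by (simp add: fst_interp)
  moreover have "?dt x y \<le> ?d1 x y" if "x \<in> ?M" "y \<in> ?M" for x y
    using mult_left_mono[OF lip(2)[OF that], of "1 - t"] assms(5)
    by (simp add: fst_interp algebra_simps)
  ultimately have "t * ?d1 x y \<le> ?dt x y" "?dt x y \<le> ?d1 x y" if "x \<in> ?M" "y \<in> ?M" for x y
    using that by auto
  note equivalent = Lipschitz_equivalent_mtopology_eq[OF metric1 metric_t \<open>0 < t\<close> this]
    Lipschitz_equivalent_mcomplete[OF metric1 metric_t \<open>0 < t\<close> this]
  show ?thesis
    using assms(2) metric_t equivalent unfolding mm_space_def Let_def by simp
qed

lemma lip_dominated_interp_mono: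
  assumes "lip1 X1 X0 f" "s \<le> t"
  shows "interp X0 X1 f s \<prec> interp X0 X1 f t"
proof -
  have "fst (interp X0 X1 f s) x y \<le> fst (interp X0 X1 f t) x y"
    if "x \<in> space (snd X1)" "y \<in> space (snd X1)" for x y
  proof -
    have "fst X0 (f x) (f y) \<le> fst X1 x y"
      using assms(1) that by (simp add: lip1_def)
    then have "0 \<le> (t - s) * (fst X1 x y - fst X0 (f x) (f y))"
      using assms(2) by simp
    then show ?thesis
      using interp_dist_diff[of X0 X1 f t x y s] by linarith
  qed
  then have "lip1 (interp X0 X1 f t) (interp X0 X1 f s) (\<lambda>x. x)"
    by (simp add: lip1_def)
  then show ?thesis
    unfolding lip_dominated_def by (intro exI[of _ "\<lambda>x. x"]) simp
qed

lemma lip_dominated_interp: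
  assumes "lip1 X1 X0 f" "f \<in> measurable (snd X1) (snd X0)" "distr (snd X1) (snd X0) f = snd X0"
    and "0 \<le> t"
  shows "X0 \<prec> interp X0 X1 f t"
proof -
  have "fst X0 (f x) (f y) \<le> fst (interp X0 X1 f t) x y"
    if "x \<in> space (snd X1)" "y \<in> space (snd X1)" for x y
  proof -
    have "fst X0 (f x) (f y) \<le> fst X1 x y"
      using assms(1) that by (simp add: lip1_def)
    then have "0 \<le> t * (fst X1 x y - fst X0 (f x) (f y))"
      using assms(4) by simp
    then show ?thesis
      using interp_dist_diff[of X0 X1 f t x y 0] by (simp add: fst_interp)
  qed
  then have "lip1 (interp X0 X1 f t) X0 f"
    using assms(1) by (simp add: lip1_def)
  then show ?thesis
    unfolding lip_dominated_def using assms(2,3) by auto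
qed

lemma box_dist_interp_le:
  assumes "mm_space X0" "lip1 X1 X0 f" "parameter X1 \<psi>" "parameter Y \<phi>"
    and Y: "\<And>s s'. s \<in> {0..<1} \<Longrightarrow> s' \<in> {0..<1} \<Longrightarrow>
      fst Y (\<phi> s) (\<phi> s') = fst (interp X0 X1 f u) (\<psi> s) (\<psi> s')"
    and I: "I \<in> sets unit_lebesgue" "1 - \<epsilon> \<le> measure unit_lebesgue I"
    and R: "\<And>s s'. s \<in> I \<Longrightarrow> s' \<in> I \<Longrightarrow> fst X1 (\<psi> s) (\<psi> s') \<le> R" "0 \<le> R"
    and t: "\<bar>t - u\<bar> * R \<le> \<epsilon>"
  shows "box_dist (interp X0 X1 f t) Y \<le> \<epsilon>" and "0 \<le> box_dist (interp X0 X1 f t) Y"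
proof -
  have param: "parameter (interp X0 X1 f t) \<psi>"
    using assms(3) by (simp add: parameter_def)
  have "I \<subseteq> {0..<1}"
    using sets.sets_into_space[OF I(1)] by simp
  then have I_in: "\<psi> s \<in> space (snd X1)" if "s \<in> I" for s
    using that assms(3) measurable_space[of \<psi> unit_lebesgue "snd X1" s] by (auto simp: parameter_def)
  have close: "\<bar>fst (interp X0 X1 f t) (\<psi> s) (\<psi> s') - fst Y (\<phi> s) (\<phi> s')\<bar> \<le> \<epsilon>"
    if "s \<in> I" "s' \<in> I" for s s'
  proof -
    let ?d0 = "fst X0 (f (\<psi> s)) (f (\<psi> s'))" and ?d1 = "fst X1 (\<psi> s) (\<psi> s')"
    have "0 \<le> ?d0"
      using assms(1) Metric_space.nonneg by (fastforce simp: mm_space_def Let_def)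
    moreover have "?d0 \<le> ?d1"
      using assms(2) I_in that by (simp add: lip1_def)
    ultimately have "\<bar>(t - u) * (?d1 - ?d0)\<bar> \<le> \<bar>t - u\<bar> * R"
      using R(1)[OF that] by (simp add: abs_mult mult_left_mono)
    moreover have "fst Y (\<phi> s) (\<phi> s') = fst (interp X0 X1 f u) (\<psi> s) (\<psi> s')"
      using \<open>I \<subseteq> {0..<1}\<close> that by (intro Y) auto
    ultimately show ?thesis
      using t interp_dist_diff[of X0 X1 f t "\<psi> s" "\<psi> s'" u] by simp
  qed
  have "0 \<le> \<epsilon>"
    using t R(2) by (meson abs_ge_zero mult_nonneg_nonneg order_trans)
  then show "box_dist (interp X0 X1 f t) Y \<le> \<epsilon>" "0 \<le> box_dist (interp X0 X1 f t) Y"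
    using box_dist_le[OF param assms(4) I _ close] by auto
qed

lemma box_dist_interp_tendsto:
  assumes "mm_space X0" "mm_space X1" "lip1 X1 X0 f" "parameter X1 \<psi>" "parameter Y \<phi>"
    and "\<And>s s'. s \<in> {0..<1} \<Longrightarrow> s' \<in> {0..<1} \<Longrightarrow>
      fst Y (\<phi> s) (\<phi> s') = fst (interp X0 X1 f u) (\<psi> s) (\<psi> s')"
  shows "((\<lambda>t. box_dist (interp X0 X1 f t) Y) \<longlongrightarrow> 0) (at u)"
proof (rule tendstoI)
  fix \<epsilon> :: real assume "0 < \<epsilon>"
  then have "0 < \<epsilon> / 2"
    by simp
  then obtain R I where "0 \<le> R" and I: "I \<in> sets unit_lebesgue" "1 - \<epsilon> / 2 \<le> measure unit_lebesgue I"
    and R: "\<And>s s'. s \<in> I \<Longrightarrow> s' \<in> I \<Longrightarrow> fst X1 (\<psi> s) (\<psi> s') \<le> R"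
    using parameter_bounded_on_large_set[OF assms(2,4)] by blast
  have "((\<lambda>t. \<bar>t - u\<bar> * R) \<longlongrightarrow> 0) (at u)"
    by (auto intro!: tendsto_eq_intros)
  then have "\<forall>\<^sub>F t in at u. \<bar>t - u\<bar> * R < \<epsilon> / 2"
    using \<open>0 < \<epsilon>\<close> by (intro order_tendstoD(2)) auto
  then show "\<forall>\<^sub>F t in at u. dist (box_dist (interp X0 X1 f t) Y) 0 < \<epsilon>"
  proof eventually_elim
    case (elim t)
    then show ?case
      using box_dist_interp_le[OF assms(1,3,4,5,6) I R \<open>0 \<le> R\<close>, of t] \<open>0 < \<epsilon>\<close> by simp
  qed
qed

theorem proposition7p1:
  fixes X0 :: "'a mm" and X1 :: "'b mm" and f :: "'b \<Rightarrow> 'a"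
  assumes "mm_space X0" and "mm_space X1"
    and "X0 \<prec> X1"
    and "lip1 X1 X0 f" and "f \<in> measurable (snd X1) (snd X0)"
    and "distr (snd X1) (snd X0) f = snd X0"
  defines "Xt \<equiv> interp X0 X1 f"
  shows "(\<forall>t\<in>{0<..1}. mm_space (Xt t))
    \<and> Xt 1 = X1
    \<and> ((\<lambda>t. box_dist (Xt t) X0) \<longlongrightarrow> 0) (at_right 0)
    \<and> (\<forall>t0\<in>{0<..1}. ((\<lambda>t. box_dist (Xt t) (Xt t0)) \<longlongrightarrow> 0) (at t0 within {0<..1}))
    \<and> (\<forall>t\<in>{0<..1}. X0 \<prec> Xt t)
    \<and> (\<forall>s t. 0 < s \<and> s \<le> t \<and> t \<le> 1 \<longrightarrow> Xt s \<prec> Xt t)"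
proof -
  obtain \<psi> where \<psi>: "parameter X1 \<psi>"
    using mm_space_has_parameter[OF assms(2)] .
  have "((\<lambda>t. box_dist (Xt t) X0) \<longlongrightarrow> 0) (at 0)"
    unfolding Xt_def using parameter_distr[OF \<psi> assms(5,6)]
    by (rule box_dist_interp_tendsto[OF assms(1,2,4) \<psi>]) (simp add: fst_interp)
  moreover have "((\<lambda>t. box_dist (Xt t) (Xt t0)) \<longlongrightarrow> 0) (at t0)" for t0
    unfolding Xt_def using \<psi>
    by (intro box_dist_interp_tendsto[OF assms(1,2,4) \<psi>]) (simp_all add: parameter_def)
  moreover have "Xt 1 = X1"
    by (simp add: Xt_def interp_def)
  ultimately show ?thesis
    using mm_space_interp[OF assms(1,2,4)] lip_dominated_interp[OF assms(4,5,6)]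
      lip_dominated_interp_mono[OF assms(4)]
    unfolding Xt_def by (auto intro: tendsto_mono[OF at_le[OF subset_UNIV]])
qed

end
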